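(* Let $\Phi$ be an irreducible root system of rank $r$. For any $i\neq j$ in $\{0,1,\dots,r\}$ with $\gcd(m_i,m_j)=1$, the set $\Phi\cap\mathbb Z\{\tilde\alpha_k: k\in\{0,\dots,r\}\setminus\{i,j\}\}$ (the root subsystem generated by the roots of the nodes of the affine Dynkin diagram remaining after deleting the nodes $\tilde\alpha_i,\tilde\alpha_j$) is a good root subsystem of $\Phi$. Conversely, every good root subsystem of $\Phi$ is $W$-conjugate to one obtained in this way.
   Context: Let $\Phi$ be an irreducible reduced crystallographic root system of rank $r$ with Weyl group $W$, $\{\alpha_1,\dots,\alpha_r\}$ a base, and $\theta=\sum_{i=1}^r m_i\alpha_i$ the highest root (each $m_i$ a positive integer). Set $m_0=1$, $\tilde\alpha_0=-\theta$ and $\tilde\alpha_i=\alpha_i$ for $1\le i\le r$; $m_i$ is the Dynkin label of $\tilde\alpha_i$. $\mathbb Z\{\cdot\}$ denotes the integral span. A root subsystem $\Psi\subseteq\Phi$ is closed if $\lambda,\mu\in\Psi$, $\lambda+\mu\in\Phi$ imply $\lambda+\mu\in\Psi$; $\operatorname{rk}\Psi=\dim\operatorname{Span}\Psi$. A good root subsystem of $\Phi$ is a closed root subsystem of rank $r-1$ maximal under inclusion among closed root subsystems of rank $r-1$. *)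

theory Defs
  imports "HOL-Analysis.Analysis"
begin

text \<open>Root systems inside a real Euclidean space. The ambient space need not be
spanned by the roots; the rank is the dimension of the span of the roots.\<close>

definition coroot_pair :: "'a::euclidean_space \<Rightarrow> 'a \<Rightarrow> real" where
  "coroot_pair x \<alpha> = 2 * (x \<bullet> \<alpha>) / (\<alpha> \<bullet> \<alpha>)"

definition refl :: "'a::euclidean_space \<Rightarrow> 'a \<Rightarrow> 'a" where
  "refl \<alpha> x = x - coroot_pair x \<alpha> *\<^sub>R \<alpha>"

definition root_system :: "'a::euclidean_space set \<Rightarrow> bool" where
  "root_system \<Phi> \<longleftrightarrow> finite \<Phi> \<and> 0 \<notin> \<Phi>
     \<and> (\<forall>\<alpha>\<in>\<Phi>. \<forall>\<beta>\<in>\<Phi>. refl \<alpha> \<beta> \<in> \<Phi>)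
     \<and> (\<forall>\<alpha>\<in>\<Phi>. \<forall>\<beta>\<in>\<Phi>. coroot_pair \<beta> \<alpha> \<in> \<int>)
     \<and> (\<forall>\<alpha>\<in>\<Phi>. \<forall>c::real. c *\<^sub>R \<alpha> \<in> \<Phi> \<longrightarrow> c = 1 \<or> c = -1)"

definition irreducible_rs :: "'a::euclidean_space set \<Rightarrow> bool" where
  "irreducible_rs \<Phi> \<longleftrightarrow> \<Phi> \<noteq> {} \<and>
     \<not> (\<exists>A B. A \<noteq> {} \<and> B \<noteq> {} \<and> A \<union> B = \<Phi> \<and> A \<inter> B = {}
              \<and> (\<forall>a\<in>A. \<forall>b\<in>B. a \<bullet> b = 0))"

definition rank :: "'a::euclidean_space set \<Rightarrow> nat" where
  "rank \<Psi> = dim (span \<Psi>)"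

definition is_base :: "'a::euclidean_space set \<Rightarrow> nat \<Rightarrow> (nat \<Rightarrow> 'a) \<Rightarrow> bool" where
  "is_base \<Phi> r b \<longleftrightarrow> (\<forall>i\<in>{1..r}. b i \<in> \<Phi>) \<and> inj_on b {1..r}
     \<and> independent (b ` {1..r})
     \<and> (\<forall>\<beta>\<in>\<Phi>. \<exists>c::nat \<Rightarrow> int. \<beta> = (\<Sum>i=1..r. of_int (c i) *\<^sub>R b i)
            \<and> ((\<forall>i\<in>{1..r}. c i \<ge> 0) \<or> (\<forall>i\<in>{1..r}. c i \<le> 0)))"

definition is_highest_root :: "'a::euclidean_space set \<Rightarrow> nat \<Rightarrow> (nat \<Rightarrow> 'a) \<Rightarrow> 'a \<Rightarrow> (nat \<Rightarrow> int) \<Rightarrow> bool" where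
  "is_highest_root \<Phi> r b \<theta> m \<longleftrightarrow> \<theta> \<in> \<Phi> \<and> \<theta> = (\<Sum>i=1..r. of_int (m i) *\<^sub>R b i)
     \<and> (\<forall>\<beta>\<in>\<Phi>. \<exists>c::nat \<Rightarrow> int. \<theta> - \<beta> = (\<Sum>i=1..r. of_int (c i) *\<^sub>R b i)
            \<and> (\<forall>i\<in>{1..r}. c i \<ge> 0))"

definition aff_root :: "(nat \<Rightarrow> 'a::euclidean_space) \<Rightarrow> 'a \<Rightarrow> nat \<Rightarrow> 'a" where
  "aff_root b \<theta> i = (if i = 0 then - \<theta> else b i)"

definition aff_label :: "(nat \<Rightarrow> int) \<Rightarrow> nat \<Rightarrow> int" where
  "aff_label m i = (if i = 0 then 1 else m i)"

definition int_span :: "(nat \<Rightarrow> 'a::euclidean_space) \<Rightarrow> nat set \<Rightarrow> 'a set" where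
  "int_span f K = {x. \<exists>c::nat \<Rightarrow> int. x = (\<Sum>k\<in>K. of_int (c k) *\<^sub>R f k)}"

definition root_subsystem :: "'a::euclidean_space set \<Rightarrow> 'a set \<Rightarrow> bool" where
  "root_subsystem \<Phi> \<Psi> \<longleftrightarrow> \<Psi> \<subseteq> \<Phi> \<and> (\<forall>\<alpha>\<in>\<Psi>. \<forall>\<beta>\<in>\<Psi>. refl \<alpha> \<beta> \<in> \<Psi>)"

definition closed_subsystem :: "'a::euclidean_space set \<Rightarrow> 'a set \<Rightarrow> bool" where
  "closed_subsystem \<Phi> \<Psi> \<longleftrightarrow> root_subsystem \<Phi> \<Psi>
     \<and> (\<forall>x\<in>\<Psi>. \<forall>y\<in>\<Psi>. x + y \<in> \<Phi> \<longrightarrow> x + y \<in> \<Psi>)"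

definition good_subsystem :: "'a::euclidean_space set \<Rightarrow> 'a set \<Rightarrow> bool" where
  "good_subsystem \<Phi> \<Psi> \<longleftrightarrow> closed_subsystem \<Phi> \<Psi> \<and> rank \<Psi> = rank \<Phi> - 1
     \<and> (\<forall>\<Psi>'. closed_subsystem \<Phi> \<Psi>' \<and> rank \<Psi>' = rank \<Phi> - 1 \<and> \<Psi> \<subseteq> \<Psi>' \<longrightarrow> \<Psi>' = \<Psi>)"

inductive_set weyl_group :: "'a::euclidean_space set \<Rightarrow> ('a \<Rightarrow> 'a) set" for \<Phi> where
  weyl_id: "id \<in> weyl_group \<Phi>"
| weyl_step: "w \<in> weyl_group \<Phi> \<Longrightarrow> \<alpha> \<in> \<Phi> \<Longrightarrow> refl \<alpha> \<circ> w \<in> weyl_group \<Phi>"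

end

theory Submission
  imports Defs
begin

text \<open>A closed subsystem \<open>\<Psi>\<close> of rank \<open>r - 1\<close> lies in \<open>\<Phi> \<inter> span \<Psi>\<close>, which is again
  closed of rank \<open>r - 1\<close>; so the good subsystems are exactly the hyperplane sections
  \<open>\<Phi> \<inter> \<nu>\<^sup>\<bottom>\<close> of rank \<open>r - 1\<close>.
  Deleting two affine nodes with coprime labels \<open>m\<^sub>i, m\<^sub>j\<close> leaves \<open>r - 1\<close> linearly
  independent roots, and a Bezout relation \<open>x m\<^sub>i + y m\<^sub>j = 1\<close> shows that every root in
  their real span already lies in their integral span; hence the subsystem they generate is
  such a section.  Conversely, conjugating \<open>\<nu>\<close> by \<open>W\<close> to a dominant \<open>\<mu>\<close> turns
  \<open>\<Phi> \<inter> \<mu>\<^sup>\<bottom>\<close> into the roots spanned by the simple roots orthogonal to \<open>\<mu>\<close>; rank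
  \<open>r - 1\<close> forces exactly one simple root \<open>\<alpha>\<^sub>k\<close> to be missing, which is the subsystem
  obtained by deleting \<open>\<tilde>\<alpha>\<^sub>0\<close> (label \<open>m\<^sub>0 = 1\<close>) and \<open>\<tilde>\<alpha>\<^sub>k\<close>.\<close>

lemma linear_refl: "linear (refl \<alpha>)"
  unfolding refl_def coroot_pair_def
  by (rule linearI) (auto simp: inner_add_left algebra_simps add_divide_distrib scaleR_add_left)

lemma inner_refl_refl: "refl \<alpha> x \<bullet> refl \<alpha> y = x \<bullet> y"
  by (cases "\<alpha> = 0")
    (simp_all add: refl_def coroot_pair_def inner_diff_left inner_diff_right inner_commute field_simps)

lemma refl_refl: "refl \<alpha> (refl \<alpha> x) = x"
  by (cases "\<alpha> = 0")
    (simp_all add: refl_def coroot_pair_def inner_diff_left field_simps scaleR_diff_left)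

lemma weyl_group_comp: "w \<in> weyl_group \<Phi> \<Longrightarrow> v \<in> weyl_group \<Phi> \<Longrightarrow> w \<circ> v \<in> weyl_group \<Phi>"
  by (induction w rule: weyl_group.induct) (auto simp: o_assoc[symmetric] intro: weyl_group.intros)

lemma refl_in_weyl_group: "\<alpha> \<in> \<Phi> \<Longrightarrow> refl \<alpha> \<in> weyl_group \<Phi>"
  using weyl_step[OF weyl_id] by simp

lemma weyl_group_inverse:
  "w \<in> weyl_group \<Phi> \<Longrightarrow> \<exists>v\<in>weyl_group \<Phi>. v \<circ> w = id \<and> w \<circ> v = id"
proof (induction w rule: weyl_group.induct)
  case weyl_id
  show ?case by (intro bexI[of _ id] weyl_group.weyl_id) simp
next
  case (weyl_step w \<alpha>)
  then obtain v where "v \<in> weyl_group \<Phi>" "v \<circ> w = id" "w \<circ> v = id" by blast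
  moreover have "v \<circ> refl \<alpha> \<in> weyl_group \<Phi>"
    using weyl_group_comp[OF \<open>v \<in> _\<close> refl_in_weyl_group[OF weyl_step(2)]] .
  ultimately show ?case
    by (intro bexI[of _ "v \<circ> refl \<alpha>"]) (auto simp: fun_eq_iff refl_refl pointfree_idE)
qed

lemma linear_weyl_group: "w \<in> weyl_group \<Phi> \<Longrightarrow> linear w"
proof (induction w rule: weyl_group.induct)
  case (weyl_step w \<alpha>)
  then show ?case using linear_compose[OF weyl_step(3) linear_refl] by (simp add: o_def)
qed (use linear_id in \<open>simp add: id_def\<close>)

lemma inner_weyl_group: "w \<in> weyl_group \<Phi> \<Longrightarrow> w x \<bullet> w y = x \<bullet> y"
  by (induction w rule: weyl_group.induct) (auto simp: inner_refl_refl)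

lemma weyl_group_maps_roots:
  "w \<in> weyl_group \<Phi> \<Longrightarrow> root_system \<Phi> \<Longrightarrow> x \<in> \<Phi> \<Longrightarrow> w x \<in> \<Phi>"
  by (induction w rule: weyl_group.induct) (auto simp: root_system_def)

lemma int_span_add: "x \<in> int_span f K \<Longrightarrow> y \<in> int_span f K \<Longrightarrow> x + y \<in> int_span f K"
  unfolding int_span_def
proof clarify
  fix c d :: "nat \<Rightarrow> int"
  show "\<exists>e. (\<Sum>k\<in>K. of_int (c k) *\<^sub>R f k) + (\<Sum>k\<in>K. of_int (d k) *\<^sub>R f k)
          = (\<Sum>k\<in>K. of_int (e k) *\<^sub>R f k)"
    by (rule exI[of _ "\<lambda>k. c k + d k"]) (simp add: scaleR_add_left sum.distrib)
qed

lemma int_span_scaleR: "z \<in> \<int> \<Longrightarrow> x \<in> int_span f K \<Longrightarrow> z *\<^sub>R x \<in> int_span f K"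
  unfolding int_span_def
proof (clarify elim!: Ints_cases)
  fix c :: "nat \<Rightarrow> int" and n :: int
  show "\<exists>e. of_int n *\<^sub>R (\<Sum>k\<in>K. of_int (c k) *\<^sub>R f k) = (\<Sum>k\<in>K. of_int (e k) *\<^sub>R f k)"
    by (rule exI[of _ "\<lambda>k. n * c k"]) (simp add: scaleR_sum_right)
qed

lemma int_span_base: "finite K \<Longrightarrow> k \<in> K \<Longrightarrow> f k \<in> int_span f K"
  unfolding int_span_def
  by (rule CollectI, rule exI[of _ "\<lambda>l. if l = k then 1 else 0"])
    (simp add: if_distrib[of "\<lambda>c. real_of_int c *\<^sub>R _"] cong: if_cong)

lemma int_span_subset_span: "int_span f K \<subseteq> span (f ` K)"
  unfolding int_span_def by clarify (intro span_sum span_scale span_base; simp)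

lemma int_span_cong: "(\<And>k. k \<in> K \<Longrightarrow> f k = g k) \<Longrightarrow> int_span f K = int_span g K"
  unfolding int_span_def by (metis (no_types, lifting) sum.cong)

lemma closed_subsystem_orthogonal:
  assumes "root_system \<Phi>"
  shows "closed_subsystem \<Phi> {\<beta>\<in>\<Phi>. \<beta> \<bullet> \<nu> = 0}"
  using assms unfolding closed_subsystem_def root_subsystem_def root_system_def
  by (auto simp: refl_def inner_diff_left inner_add_left)

lemma closed_subsystem_int_span:
  assumes "root_system \<Phi>"
  shows "closed_subsystem \<Phi> (\<Phi> \<inter> int_span f K)"
proof -
  have "refl \<alpha> \<beta> \<in> int_span f K"
    if "\<alpha> \<in> \<Phi> \<inter> int_span f K" "\<beta> \<in> \<Phi> \<inter> int_span f K" for \<alpha> \<beta>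
  proof -
    have "coroot_pair \<beta> \<alpha> \<in> \<int>" using assms that by (auto simp: root_system_def)
    then have "\<beta> + (- coroot_pair \<beta> \<alpha>) *\<^sub>R \<alpha> \<in> int_span f K"
      using that by (intro int_span_add int_span_scaleR) auto
    then show ?thesis by (simp add: refl_def)
  qed
  with assms show ?thesis
    unfolding closed_subsystem_def root_subsystem_def root_system_def
    by (auto intro: int_span_add)
qed

lemma good_subsystemI:
  assumes "closed_subsystem \<Phi> \<Psi>" "rank \<Psi> = rank \<Phi> - 1"
    and "\<And>\<beta>. \<beta> \<in> \<Phi> \<Longrightarrow> \<beta> \<in> span \<Psi> \<Longrightarrow> \<beta> \<in> \<Psi>"
  shows "good_subsystem \<Phi> \<Psi>"
  unfolding good_subsystem_def
proof (intro conjI allI impI assms(1,2))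
  fix \<Psi>' assume \<Psi>': "closed_subsystem \<Phi> \<Psi>' \<and> rank \<Psi>' = rank \<Phi> - 1 \<and> \<Psi> \<subseteq> \<Psi>'"
  then have "span \<Psi> = span \<Psi>'"
    using assms(2) by (intro dim_eq_span) (auto simp: rank_def)
  moreover have "\<Psi>' \<subseteq> \<Phi>"
    using \<Psi>' by (simp add: closed_subsystem_def root_subsystem_def)
  ultimately show "\<Psi>' = \<Psi>"
    using \<Psi>' assms(3) span_superset by blast
qed

text \<open>Any \<open>\<nu> \<in> span \<Phi>\<close> orthogonal to \<open>\<Psi>\<close> works: \<open>\<Phi> \<inter> \<nu>\<^sup>\<bottom>\<close> is closed, of rank
  \<open>r - 1\<close> and contains \<open>\<Psi>\<close>, so maximality makes it equal to \<open>\<Psi>\<close>.\<close>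
lemma good_subsystem_orthogonal:
  assumes "good_subsystem \<Phi> \<Psi>" "root_system \<Phi>" "0 < rank \<Phi>"
  obtains \<nu> where "\<nu> \<noteq> 0" "\<nu> \<in> span \<Phi>" "\<Psi> = {\<beta>\<in>\<Phi>. \<beta> \<bullet> \<nu> = 0}"
proof -
  have closed: "closed_subsystem \<Phi> \<Psi>" and rank: "rank \<Psi> = rank \<Phi> - 1"
    using assms(1) by (auto simp: good_subsystem_def)
  have "\<Psi> \<subseteq> \<Phi>" using closed by (simp add: closed_subsystem_def root_subsystem_def)
  have "span \<Psi> \<noteq> span \<Phi>"
    using rank assms(3) dim_span by (metis rank_def diff_less less_irrefl zero_less_one)
  then have "span \<Psi> \<subset> span \<Phi>" using \<open>\<Psi> \<subseteq> \<Phi>\<close> span_mono by blast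
  then obtain \<nu> where \<nu>: "\<nu> \<noteq> 0" "\<nu> \<in> span \<Phi>" "\<And>y. y \<in> span \<Psi> \<Longrightarrow> orthogonal \<nu> y"
    using orthogonal_to_subspace_exists_gen by metis
  define \<Psi>' where "\<Psi>' = {\<beta>\<in>\<Phi>. \<beta> \<bullet> \<nu> = 0}"
  have "\<Psi> \<subseteq> \<Psi>'"
    using \<nu>(3) \<open>\<Psi> \<subseteq> \<Phi>\<close> span_superset by (fastforce simp: \<Psi>'_def orthogonal_def inner_commute)
  have "\<nu> \<notin> span \<Psi>'"
  proof
    assume "\<nu> \<in> span \<Psi>'"
    then have "orthogonal \<nu> \<nu>"
      by (rule orthogonal_to_span) (auto simp: \<Psi>'_def orthogonal_def inner_commute)
    with \<nu>(1) show False by (simp add: orthogonal_def)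
  qed
  then have "span \<Psi>' \<subset> span \<Phi>"
    using \<nu>(2) span_mono[of \<Psi>' \<Phi>] by (auto simp: \<Psi>'_def)
  then have "rank \<Psi>' < rank \<Phi>" using dim_psubset rank_def by (metis dim_span)
  moreover have "rank \<Psi> \<le> rank \<Psi>'" using dim_subset[OF \<open>\<Psi> \<subseteq> \<Psi>'\<close>] by (simp add: rank_def)
  ultimately have "rank \<Psi>' = rank \<Phi> - 1" using rank by linarith
  then have "\<Psi>' = \<Psi>"
    using assms(1) closed_subsystem_orthogonal[OF assms(2)] \<open>\<Psi> \<subseteq> \<Psi>'\<close>
    unfolding good_subsystem_def \<Psi>'_def by blast
  with \<nu> show thesis using that unfolding \<Psi>'_def by blast
qed

lemma weyl_group_maps_span:
  assumes "w \<in> weyl_group \<Phi>" "root_system \<Phi>" "x \<in> span \<Phi>"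
  shows "w x \<in> span \<Phi>"
proof -
  have "w ` span \<Phi> = span (w ` \<Phi>)"
    by (rule span_linear_image[OF linear_weyl_group[OF assms(1)], symmetric])
  also have "\<dots> \<subseteq> span \<Phi>" using weyl_group_maps_roots[OF assms(1,2)] by (intro span_mono) auto
  finally show ?thesis using assms(3) by blast
qed

lemma weyl_group_image_orthogonal:
  assumes "w \<in> weyl_group \<Phi>" "root_system \<Phi>"
  shows "w ` {\<beta>\<in>\<Phi>. \<beta> \<bullet> \<nu> = 0} = {\<gamma>\<in>\<Phi>. \<gamma> \<bullet> w \<nu> = 0}"
proof
  show "w ` {\<beta>\<in>\<Phi>. \<beta> \<bullet> \<nu> = 0} \<subseteq> {\<gamma>\<in>\<Phi>. \<gamma> \<bullet> w \<nu> = 0}"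
    using weyl_group_maps_roots[OF assms] inner_weyl_group[OF assms(1)] by auto
  obtain v where v: "v \<in> weyl_group \<Phi>" "v \<circ> w = id" "w \<circ> v = id"
    using weyl_group_inverse[OF assms(1)] by blast
  have "\<gamma> \<in> w ` {\<beta>\<in>\<Phi>. \<beta> \<bullet> \<nu> = 0}" if "\<gamma> \<in> \<Phi>" "\<gamma> \<bullet> w \<nu> = 0" for \<gamma>
  proof
    show "\<gamma> = w (v \<gamma>)" using v(3) by (simp add: pointfree_idE)
    have "v \<gamma> \<bullet> \<nu> = v \<gamma> \<bullet> v (w \<nu>)" using v(2) by (simp add: pointfree_idE)
    then show "v \<gamma> \<in> {\<beta>\<in>\<Phi>. \<beta> \<bullet> \<nu> = 0}"
      using that weyl_group_maps_roots[OF v(1) assms(2)] inner_weyl_group[OF v(1)] by simp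
  qed
  then show "{\<gamma>\<in>\<Phi>. \<gamma> \<bullet> w \<nu> = 0} \<subseteq> w ` {\<beta>\<in>\<Phi>. \<beta> \<bullet> \<nu> = 0}" by blast
qed

lemma sum_eq_0_same_sign:
  fixes t :: "'i \<Rightarrow> real"
  assumes "finite A" "sum t A = 0" "(\<forall>l\<in>A. t l \<ge> 0) \<or> (\<forall>l\<in>A. t l \<le> 0)" "l \<in> A"
  shows "t l = 0"
  using assms(3)
proof
  assume "\<forall>l\<in>A. t l \<le> 0"
  moreover have "sum (\<lambda>l. - t l) A = 0" using assms(2) by (simp add: sum_negf)
  ultimately show ?thesis using assms(1,4) sum_nonneg_eq_0_iff[of A "\<lambda>l. - t l"] by auto
qed (use assms sum_nonneg_eq_0_iff in auto)

locale based_root_system =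
  fixes \<Phi> :: "'a::euclidean_space set" and r :: nat and b :: "nat \<Rightarrow> 'a"
  assumes root_system: "root_system \<Phi>" and base: "is_base \<Phi> r b"
begin

lemma finite_roots: "finite \<Phi>" and zero_not_root: "0 \<notin> \<Phi>"
  and refl_root: "\<alpha> \<in> \<Phi> \<Longrightarrow> \<beta> \<in> \<Phi> \<Longrightarrow> refl \<alpha> \<beta> \<in> \<Phi>"
  using root_system by (auto simp: root_system_def)

lemma simple_root: "l \<in> {1..r} \<Longrightarrow> b l \<in> \<Phi>"
  and inj_on_simple_roots: "inj_on b {1..r}"
  and independent_simple_roots: "independent (b ` {1..r})"
  using base by (auto simp: is_base_def)

lemma root_coords:
  assumes "\<beta> \<in> \<Phi>"
  obtains c :: "nat \<Rightarrow> int" where "\<beta> = (\<Sum>l=1..r. of_int (c l) *\<^sub>R b l)"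
    "(\<forall>l\<in>{1..r}. c l \<ge> 0) \<or> (\<forall>l\<in>{1..r}. c l \<le> 0)"
  using base assms unfolding is_base_def by blast

lemma simple_coords_unique:
  assumes "(\<Sum>l=1..r. x l *\<^sub>R b l) = (\<Sum>l=1..r. y l *\<^sub>R b l)" "l \<in> {1..r}"
  shows "x l = y l"
proof -
  obtain g where g: "\<And>l. l \<in> {1..r} \<Longrightarrow> g (b l) = l"
    using inj_on_simple_roots by (metis the_inv_into_f_f)
  define c where "c v = x (g v) - y (g v)" for v
  have "(\<Sum>v\<in>b ` {1..r}. c v *\<^sub>R v) = (\<Sum>l=1..r. c (b l) *\<^sub>R b l)"
    by (rule sum.reindex[OF inj_on_simple_roots, unfolded o_def])
  also have "\<dots> = (\<Sum>l=1..r. (x l - y l) *\<^sub>R b l)"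
    by (rule sum.cong) (simp_all add: c_def g)
  also have "\<dots> = 0"
    using assms(1) by (simp add: scaleR_diff_left sum_subtractf)
  finally have "c (b l) = 0"
    using assms(2) independent_simple_roots unfolding independent_explicit by blast
  then show ?thesis using g[OF assms(2)] by (simp add: c_def)
qed

lemma span_roots: "span \<Phi> = span (b ` {1..r})"
proof
  have "\<beta> \<in> span (b ` {1..r})" if "\<beta> \<in> \<Phi>" for \<beta>
  proof -
    obtain c where "\<beta> = (\<Sum>l=1..r. of_int (c l) *\<^sub>R b l)"
      using root_coords[OF \<open>\<beta> \<in> \<Phi>\<close>] by metis
    moreover have "(\<Sum>l=1..r. of_int (c l) *\<^sub>R b l) \<in> span (b ` {1..r})"
      by (intro span_sum span_scale span_base) auto
    ultimately show ?thesis by simp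
  qed
  then show "span \<Phi> \<subseteq> span (b ` {1..r})"
    by (intro span_minimal[OF _ subspace_span]) auto
  show "span (b ` {1..r}) \<subseteq> span \<Phi>" using simple_root by (intro span_mono) auto
qed

lemma rank_roots: "rank \<Phi> = r"
proof -
  have "rank \<Phi> = dim (span (b ` {1..r}))" by (simp add: rank_def span_roots)
  also have "\<dots> = card (b ` {1..r})"
    using dim_eq_card_independent[OF independent_simple_roots] by (simp only: dim_span)
  finally show ?thesis using card_image[OF inj_on_simple_roots] by simp
qed

lemma eq_0_if_orthogonal_simple_roots:
  assumes "x \<in> span \<Phi>" "\<And>l. l \<in> {1..r} \<Longrightarrow> x \<bullet> b l = 0"
  shows "x = 0"
proof -
  have "x \<in> span (b ` {1..r})" using assms(1) span_roots by simp
  then have "orthogonal x x"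
    by (rule orthogonal_to_span) (use assms(2) in \<open>auto simp: orthogonal_def\<close>)
  then show ?thesis by (simp add: orthogonal_self)
qed

text \<open>Since \<open>W\<close> is orthogonal and permutes \<open>\<Phi>\<close>, \<open>w \<nu> \<bullet> b l = \<nu> \<bullet> w\<inverse> (b l) \<in> \<nu> \<bullet> \<Phi>\<close>, and a
  vector of \<open>span \<Phi>\<close> is determined by its pairings with the simple roots.\<close>
lemma finite_weyl_orbit:
  assumes "\<nu> \<in> span \<Phi>"
  shows "finite {w \<nu> |w. w \<in> weyl_group \<Phi>}" (is "finite ?O")
proof -
  define T where "T = (\<lambda>\<gamma>. \<nu> \<bullet> \<gamma>) ` \<Phi>"
  define h where "h x = restrict (\<lambda>l. x \<bullet> b l) {1..r}" for x
  have "w \<nu> \<bullet> b l \<in> T" if w: "w \<in> weyl_group \<Phi>" and l: "l \<in> {1..r}" for w l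
  proof -
    obtain v where v: "v \<in> weyl_group \<Phi>" "w \<circ> v = id"
      using weyl_group_inverse[OF w] by blast
    have "w \<nu> \<bullet> b l = w \<nu> \<bullet> w (v (b l))" using v(2) by (simp add: pointfree_idE)
    also have "\<dots> = \<nu> \<bullet> v (b l)" using inner_weyl_group[OF w] .
    finally show ?thesis
      unfolding T_def using weyl_group_maps_roots[OF v(1) root_system simple_root[OF l]] by blast
  qed
  then have "h ` ?O \<subseteq> PiE {1..r} (\<lambda>_. T)" by (auto simp: h_def)
  moreover have "inj_on h ?O"
  proof (rule inj_onI)
    fix x y assume xy: "x \<in> ?O" "y \<in> ?O" "h x = h y"
    have "x - y \<in> span \<Phi>"
      using xy(1,2) weyl_group_maps_span[OF _ root_system assms] by (auto intro: span_diff)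
    moreover have "(x - y) \<bullet> b l = 0" if "l \<in> {1..r}" for l
      using fun_cong[OF xy(3), of l] that by (simp add: h_def inner_diff_left)
    ultimately have "x - y = 0" by (rule eq_0_if_orthogonal_simple_roots)
    then show "x = y" by simp
  qed
  moreover have "finite (PiE {1..r} (\<lambda>_. T))"
    using finite_roots by (intro finite_PiE) (simp_all add: T_def)
  ultimately show ?thesis using inj_on_finite by blast
qed

text \<open>The conjugate maximising the height functional \<open>g\<close> (the linear form with
  \<open>g (b l) = 1\<close>) is dominant: a reflection in a simple root pairing negatively with it
  would raise its height.\<close>
lemma dominant_weyl_conjugate:
  assumes "\<nu> \<in> span \<Phi>"
  obtains w where "w \<in> weyl_group \<Phi>" "\<And>l. l \<in> {1..r} \<Longrightarrow> w \<nu> \<bullet> b l \<ge> 0"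
proof -
  obtain g :: "'a \<Rightarrow> real" where g: "linear g" "\<And>x. x \<in> b ` {1..r} \<Longrightarrow> g x = 1"
    using linear_independent_extend[OF independent_simple_roots, of "\<lambda>_. 1"] by blast
  define Orb where "Orb = {w \<nu> |w. w \<in> weyl_group \<Phi>}"
  have "\<nu> \<in> Orb" unfolding Orb_def by (rule CollectI, rule exI[of _ id]) (simp add: weyl_id)
  have "finite Orb" using finite_weyl_orbit[OF assms] by (simp add: Orb_def)
  then have "Max (g ` Orb) \<in> g ` Orb" using \<open>\<nu> \<in> Orb\<close> by (intro Max_in) auto
  then obtain w where w: "w \<in> weyl_group \<Phi>" "g (w \<nu>) = Max (g ` Orb)"
    by (auto simp: Orb_def)
  have "w \<nu> \<bullet> b l \<ge> 0" if l: "l \<in> {1..r}" for l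
  proof (rule ccontr)
    assume "\<not> w \<nu> \<bullet> b l \<ge> 0"
    moreover have "b l \<bullet> b l > 0" using simple_root[OF l] zero_not_root by auto
    ultimately have neg: "coroot_pair (w \<nu>) (b l) < 0"
      by (simp add: coroot_pair_def divide_neg_pos)
    have "refl (b l) (w \<nu>) \<in> Orb"
      unfolding Orb_def using weyl_step[OF w(1) simple_root[OF l]]
      by (intro CollectI exI[of _ "refl (b l) \<circ> w"]) simp
    then have "g (refl (b l) (w \<nu>)) \<le> g (w \<nu>)" using \<open>finite Orb\<close> w(2) by simp
    moreover have "g (refl (b l) (w \<nu>)) = g (w \<nu>) - coroot_pair (w \<nu>) (b l)"
      unfolding refl_def using linear_diff[OF g(1)] linear_scale[OF g(1)] g(2) l by simp
    ultimately show False using neg by simp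
  qed
  with w(1) that show thesis by blast
qed

lemma orthogonal_roots_dominant:
  assumes dominant: "\<And>l. l \<in> {1..r} \<Longrightarrow> \<mu> \<bullet> b l \<ge> 0"
  shows "{\<gamma>\<in>\<Phi>. \<gamma> \<bullet> \<mu> = 0} = \<Phi> \<inter> int_span b {l\<in>{1..r}. \<mu> \<bullet> b l = 0}"
    (is "_ = \<Phi> \<inter> int_span b ?J")
proof (intro equalityI subsetI)
  fix \<gamma> assume "\<gamma> \<in> {\<gamma>\<in>\<Phi>. \<gamma> \<bullet> \<mu> = 0}"
  then have \<gamma>: "\<gamma> \<in> \<Phi>" "\<gamma> \<bullet> \<mu> = 0" by auto
  obtain c where c: "\<gamma> = (\<Sum>l=1..r. of_int (c l) *\<^sub>R b l)"
    "(\<forall>l\<in>{1..r}. c l \<ge> 0) \<or> (\<forall>l\<in>{1..r}. c l \<le> 0)"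
    using root_coords[OF \<gamma>(1)] by metis
  define t where "t l = of_int (c l) * (\<mu> \<bullet> b l)" for l
  have sum: "sum t {1..r} = 0"
    using \<gamma>(2) c(1) by (simp add: inner_sum_right t_def inner_commute)
  have sign: "(\<forall>l\<in>{1..r}. t l \<ge> 0) \<or> (\<forall>l\<in>{1..r}. t l \<le> 0)"
    using c(2) dominant by (auto simp: t_def mult_nonpos_nonneg)
  have "c l = 0" if "l \<in> {1..r} - ?J" for l
  proof -
    have "t l = 0" using that by (intro sum_eq_0_same_sign[OF _ sum sign]) auto
    then show ?thesis using that by (simp add: t_def)
  qed
  then have "of_int (c l) *\<^sub>R b l = 0" if "l \<in> {1..r} - ?J" for l
    using that by simp
  then have "\<gamma> = (\<Sum>l\<in>?J. of_int (c l) *\<^sub>R b l)"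
    unfolding c(1) by (intro sum.mono_neutral_right) blast+
  with \<gamma>(1) show "\<gamma> \<in> \<Phi> \<inter> int_span b ?J" by (auto simp: int_span_def)
next
  fix \<gamma> assume "\<gamma> \<in> \<Phi> \<inter> int_span b ?J"
  then obtain c where "\<gamma> \<in> \<Phi>" and \<gamma>: "\<gamma> = (\<Sum>l\<in>?J. of_int (c l) *\<^sub>R b l)"
    by (auto simp: int_span_def)
  moreover have "\<gamma> \<bullet> \<mu> = 0"
    unfolding \<gamma> inner_sum_left by (rule sum.neutral) (simp add: inner_commute)
  ultimately show "\<gamma> \<in> {\<gamma>\<in>\<Phi>. \<gamma> \<bullet> \<mu> = 0}" by simp
qed

lemma good_subsystem_conjugate_maximal_parabolic:
  assumes good: "good_subsystem \<Phi> \<Psi>" and "0 < r"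
  obtains k w where "k \<in> {1..r}" "w \<in> weyl_group \<Phi>"
    "\<Psi> = w ` (\<Phi> \<inter> int_span b ({1..r} - {k}))"
proof -
  obtain \<nu> where \<nu>: "\<nu> \<noteq> 0" "\<nu> \<in> span \<Phi>" and \<Psi>: "\<Psi> = {\<beta>\<in>\<Phi>. \<beta> \<bullet> \<nu> = 0}"
    using good_subsystem_orthogonal[OF good root_system] \<open>0 < r\<close> rank_roots by metis
  obtain u where u: "u \<in> weyl_group \<Phi>" and dominant: "\<And>l. l \<in> {1..r} \<Longrightarrow> u \<nu> \<bullet> b l \<ge> 0"
    using dominant_weyl_conjugate[OF \<nu>(2)] by blast
  obtain w where w: "w \<in> weyl_group \<Phi>" "w \<circ> u = id"
    using weyl_group_inverse[OF u] by blast
  define J where "J = {l\<in>{1..r}. u \<nu> \<bullet> b l = 0}"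
  define Z where "Z = \<Phi> \<inter> int_span b J"
  have "u ` \<Psi> = Z"
    unfolding \<Psi> weyl_group_image_orthogonal[OF u root_system] Z_def J_def
    by (rule orthogonal_roots_dominant[OF dominant])
  then have \<Psi>_eq: "\<Psi> = w ` Z"
    using w(2) by (auto simp: image_comp pointfree_idE)
  have "J \<subseteq> {1..r}" unfolding J_def by blast
  have "J \<noteq> {1..r}"
  proof
    assume "J = {1..r}"
    then have "u \<nu> \<bullet> b l = 0" if "l \<in> {1..r}" for l
      using that unfolding J_def by blast
    then have "u \<nu> = 0"
      using weyl_group_maps_span[OF u root_system \<nu>(2)] eq_0_if_orthogonal_simple_roots by blast
    moreover have "\<nu> = w (u \<nu>)" using w(2) by (simp add: pointfree_idE)
    ultimately show False using \<nu>(1) linear_0[OF linear_weyl_group[OF w(1)]] by simp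
  qed
  then have "card J < r"
    using psubset_card_mono[of "{1..r}" J] \<open>J \<subseteq> {1..r}\<close> by simp
  have "r - 1 = dim (w ` Z)"
    using good rank_roots \<Psi>_eq by (simp add: good_subsystem_def rank_def)
  also have "\<dots> \<le> dim Z" by (rule dim_image_le[OF linear_weyl_group[OF w(1)]])
  also have "\<dots> \<le> card (b ` J)"
    using int_span_subset_span[of b J] \<open>J \<subseteq> {1..r}\<close>
    by (intro dim_le_card) (auto simp: Z_def finite_subset)
  also have "\<dots> \<le> card J"
    using \<open>J \<subseteq> {1..r}\<close> by (intro card_image_le) (simp add: finite_subset)
  finally have "card ({1..r} - J) = 1"
    using \<open>card J < r\<close> \<open>J \<subseteq> {1..r}\<close> by (subst card_Diff_subset) (auto simp: finite_subset)
  then obtain k where "{1..r} - J = {k}" by (rule card_1_singletonE)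
  then have "J = {1..r} - {k}" "k \<in> {1..r}" using \<open>J \<subseteq> {1..r}\<close> by auto
  with that w(1) \<Psi>_eq show thesis by (simp add: Z_def)
qed

end

locale affine_root_data = based_root_system +
  fixes \<theta> :: "'a::euclidean_space" and m :: "nat \<Rightarrow> int"
  assumes highest_root: "is_highest_root \<Phi> r b \<theta> m"
begin

lemma highest_root_root: "\<theta> \<in> \<Phi>"
  and highest_root_coords: "\<theta> = (\<Sum>l=1..r. of_int (m l) *\<^sub>R b l)"
  using highest_root by (auto simp: is_highest_root_def)

lemma rank_pos: "0 < r"
  using highest_root_root highest_root_coords zero_not_root by (cases r) auto

lemma aff_root_root: "k \<le> r \<Longrightarrow> aff_root b \<theta> k \<in> \<Phi>"
proof (cases "k = 0")
  case True
  have "refl \<theta> \<theta> = - \<theta>"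
    using highest_root_root zero_not_root by (auto simp: refl_def coroot_pair_def scaleR_2)
  then show ?thesis
    using True refl_root[OF highest_root_root highest_root_root] by (simp add: aff_root_def)
qed (simp add: aff_root_def simple_root)

lemma aff_root_combination:
  assumes "K \<subseteq> {0..r}"
  shows "(\<Sum>k\<in>K. s k *\<^sub>R aff_root b \<theta> k) =
    (\<Sum>l=1..r. ((if l \<in> K then s l else 0) - (if 0 \<in> K then s 0 * of_int (m l) else 0)) *\<^sub>R b l)"
proof -
  have "K - {0} = {1..r} \<inter> K" using assms by auto
  then have "(\<Sum>k\<in>K - {0}. s k *\<^sub>R aff_root b \<theta> k) = (\<Sum>l\<in>{1..r} \<inter> K. s l *\<^sub>R b l)"
    by (auto simp: aff_root_def intro!: sum.cong)
  also have "\<dots> = (\<Sum>l=1..r. (if l \<in> K then s l else 0) *\<^sub>R b l)"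
    by (subst sum.inter_restrict) (auto intro!: sum.cong)
  finally have rest: "(\<Sum>k\<in>K - {0}. s k *\<^sub>R aff_root b \<theta> k) = \<dots>" .
  have "finite K" using assms finite_subset by blast
  have zero: "s 0 *\<^sub>R aff_root b \<theta> 0 = (\<Sum>l=1..r. (- (s 0 * of_int (m l))) *\<^sub>R b l)"
    by (simp add: aff_root_def highest_root_coords scaleR_sum_right sum_negf[symmetric])
  show ?thesis
  proof (cases "0 \<in> K")
    case True
    then show ?thesis
      using sum.remove[OF \<open>finite K\<close> True, of "\<lambda>k. s k *\<^sub>R aff_root b \<theta> k"] rest zero
      by (simp add: scaleR_diff_left sum_subtractf sum.distrib[symmetric] scaleR_add_left)
  qed (use rest in simp)
qed

context
  fixes i j :: nat
  assumes nodes: "i \<le> r" "j \<le> r" "i \<noteq> j"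
    and coprime_labels: "gcd (aff_label m i) (aff_label m j) = 1"
begin

text \<open>Instantiated with \<open>A = {0}\<close> (independence) and \<open>A = \<int>\<close> (integrality).  If \<open>\<tilde>\<alpha>\<^sub>0\<close>
  remains, both deleted nodes are simple roots with coordinates \<open>-s\<^sub>0 m\<^sub>i\<close> and
  \<open>-s\<^sub>0 m\<^sub>j\<close>, and a Bezout relation for \<open>gcd m\<^sub>i m\<^sub>j = 1\<close> recovers \<open>s\<^sub>0\<close> from them.\<close>
lemma aff_coeff_mem_subgroup:
  assumes comb: "(\<Sum>k\<in>{0..r} - {i, j}. s k *\<^sub>R aff_root b \<theta> k) = (\<Sum>l=1..r. c l *\<^sub>R b l)"
    and coords: "\<And>l. l \<in> {1..r} \<Longrightarrow> c l \<in> A"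
    and add: "\<And>x y. x \<in> A \<Longrightarrow> y \<in> A \<Longrightarrow> x + y \<in> A"
    and mult: "\<And>n x. x \<in> A \<Longrightarrow> of_int n * x \<in> A"
    and k: "k \<in> {0..r} - {i, j}"
  shows "s k \<in> A"
proof -
  let ?K = "{0..r} - {i, j}"
  define e where "e l = (if l \<in> ?K then s l else 0) - (if 0 \<in> ?K then s 0 * of_int (m l) else 0)" for l
  have "(\<Sum>l=1..r. e l *\<^sub>R b l) = (\<Sum>l=1..r. c l *\<^sub>R b l)"
    unfolding e_def comb[symmetric] by (rule aff_root_combination[symmetric]) auto
  then have c: "c l = e l" if "l \<in> {1..r}" for l
    using simple_coords_unique[OF _ that] by metis
  have s0: "s 0 \<in> A" if "0 \<in> ?K"
  proof -
    have ij: "i \<in> {1..r} - ?K" "j \<in> {1..r} - ?K" using nodes that by auto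
    then have "gcd (m i) (m j) = 1" using coprime_labels by (simp add: aff_label_def)
    then obtain x y where "x * m i + y * m j = 1" using bezout_int by metis
    then have "s 0 = s 0 * of_int (x * m i + y * m j)" by simp
    also have "\<dots> = of_int (- x) * c i + of_int (- y) * c j"
      using c[of i] c[of j] ij that by (simp add: e_def algebra_simps)
    finally have "s 0 = of_int (- x) * c i + of_int (- y) * c j" .
    moreover have "c i \<in> A" "c j \<in> A" using coords ij by auto
    ultimately show ?thesis using add mult by presburger
  qed
  show ?thesis
  proof (cases "k = 0")
    case False
    then have "k \<in> {1..r}" using k by auto
    then have "s k = c k + (if 0 \<in> ?K then of_int (m k) * s 0 else 0)"
      using c[of k] k by (simp add: e_def)
    then show ?thesis using coords[OF \<open>k \<in> {1..r}\<close>] s0 add mult by auto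
  qed (use s0 k in simp)
qed

lemma aff_root_combination_eq_0:
  assumes "(\<Sum>k\<in>{0..r} - {i, j}. s k *\<^sub>R aff_root b \<theta> k) = 0" "k \<in> {0..r} - {i, j}"
  shows "s k = 0"
  using aff_coeff_mem_subgroup[of s "\<lambda>_. 0" "{0}"] assms by simp

lemma inj_on_aff_root: "inj_on (aff_root b \<theta>) ({0..r} - {i, j})"
proof (rule inj_onI, rule ccontr)
  let ?K = "{0..r} - {i, j}"
  fix k k' assume kk: "k \<in> ?K" "k' \<in> ?K" "aff_root b \<theta> k = aff_root b \<theta> k'" "k \<noteq> k'"
  define s where "s x = (if x = k then 1 else 0) - (if x = k' then 1 else 0 :: real)" for x
  have "(\<Sum>x\<in>?K. s x *\<^sub>R aff_root b \<theta> x) =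
    (\<Sum>x\<in>?K. if x = k then aff_root b \<theta> x else 0) - (\<Sum>x\<in>?K. if x = k' then aff_root b \<theta> x else 0)"
    by (simp add: s_def scaleR_diff_left sum_subtractf if_distrib[of "\<lambda>c. c *\<^sub>R _"] cong: if_cong)
  also have "\<dots> = 0" using kk by simp
  finally have "s k = 0" using aff_root_combination_eq_0 kk(1) by blast
  with kk(4) show False by (simp add: s_def)
qed

lemma independent_aff_roots: "independent (aff_root b \<theta> ` ({0..r} - {i, j}))"
proof (rule independent_if_scalars_zero)
  let ?K = "{0..r} - {i, j}"
  fix f x assume f: "(\<Sum>v\<in>aff_root b \<theta> ` ?K. f v *\<^sub>R v) = 0" and "x \<in> aff_root b \<theta> ` ?K"
  then obtain k where k: "k \<in> ?K" "x = aff_root b \<theta> k" by blast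
  have "(\<Sum>k\<in>?K. f (aff_root b \<theta> k) *\<^sub>R aff_root b \<theta> k) = 0"
    using f by (simp add: sum.reindex[OF inj_on_aff_root])
  then show "f x = 0" using aff_root_combination_eq_0[of "\<lambda>k. f (aff_root b \<theta> k)"] k by simp
qed simp

lemma dim_aff_roots: "dim (aff_root b \<theta> ` ({0..r} - {i, j})) = r - 1"
  using dim_eq_card_independent[OF independent_aff_roots] card_image[OF inj_on_aff_root] nodes
  by (simp add: card_Diff_subset)

lemma int_span_aff_roots_if_span:
  assumes "\<beta> \<in> \<Phi>" "\<beta> \<in> span (aff_root b \<theta> ` ({0..r} - {i, j}))"
  shows "\<beta> \<in> int_span (aff_root b \<theta>) ({0..r} - {i, j})"
proof -
  let ?K = "{0..r} - {i, j}"
  obtain u where "\<beta> = (\<Sum>v\<in>aff_root b \<theta> ` ?K. u v *\<^sub>R v)"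
    using assms(2) span_finite[of "aff_root b \<theta> ` ?K"] by auto
  then have \<beta>: "\<beta> = (\<Sum>k\<in>?K. u (aff_root b \<theta> k) *\<^sub>R aff_root b \<theta> k)"
    by (simp add: sum.reindex[OF inj_on_aff_root])
  obtain c where "\<beta> = (\<Sum>l=1..r. of_int (c l) *\<^sub>R b l)" using root_coords[OF assms(1)] by metis
  then have "u (aff_root b \<theta> k) \<in> \<int>" if "k \<in> ?K" for k
    using aff_coeff_mem_subgroup[of "\<lambda>k. u (aff_root b \<theta> k)" "\<lambda>l. of_int (c l)" \<int>] \<beta> that
    by simp
  then have "\<beta> = (\<Sum>k\<in>?K. of_int \<lfloor>u (aff_root b \<theta> k)\<rfloor> *\<^sub>R aff_root b \<theta> k)"
    unfolding \<beta> by (intro sum.cong) (auto elim!: Ints_cases)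
  then show ?thesis unfolding int_span_def by fast
qed

lemma good_subsystem_delete_coprime_nodes:
  "good_subsystem \<Phi> (\<Phi> \<inter> int_span (aff_root b \<theta>) ({0..r} - {i, j}))"
proof -
  let ?K = "{0..r} - {i, j}"
  let ?\<Psi> = "\<Phi> \<inter> int_span (aff_root b \<theta>) ?K"
  have "aff_root b \<theta> k \<in> ?\<Psi>" if "k \<in> ?K" for k
    using that aff_root_root[of k] int_span_base[of ?K k] by simp
  then have "span (aff_root b \<theta> ` ?K) \<subseteq> span ?\<Psi>" by (intro span_mono) blast
  moreover have "span ?\<Psi> \<subseteq> span (aff_root b \<theta> ` ?K)"
    using int_span_subset_span by (intro span_minimal[OF _ subspace_span]) blast
  ultimately have span: "span ?\<Psi> = span (aff_root b \<theta> ` ?K)" by blast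
  show ?thesis
  proof (rule good_subsystemI[OF closed_subsystem_int_span[OF root_system]])
    show "rank ?\<Psi> = rank \<Phi> - 1"
      using dim_aff_roots rank_roots dim_span[of "aff_root b \<theta> ` ?K"] by (simp add: rank_def span)
    show "\<beta> \<in> ?\<Psi>" if "\<beta> \<in> \<Phi>" "\<beta> \<in> span ?\<Psi>" for \<beta>
      using that int_span_aff_roots_if_span span by simp
  qed
qed

end

end

theorem theoremA:
  fixes \<Phi> :: "'a::euclidean_space set" and r :: nat and b :: "nat \<Rightarrow> 'a"
    and \<theta> :: 'a and m :: "nat \<Rightarrow> int"
  assumes "root_system \<Phi>" and "irreducible_rs \<Phi>" and "rank \<Phi> = r"
    and "is_base \<Phi> r b" and "is_highest_root \<Phi> r b \<theta> m"
  shows "(\<forall>i j. i \<le> r \<and> j \<le> r \<and> i \<noteq> j \<and> gcd (aff_label m i) (aff_label m j) = 1 \<longrightarrow>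
            good_subsystem \<Phi> (\<Phi> \<inter> int_span (aff_root b \<theta>) ({0..r} - {i, j})))
       \<and> (\<forall>\<Psi>. good_subsystem \<Phi> \<Psi> \<longrightarrow>
            (\<exists>i j w. i \<le> r \<and> j \<le> r \<and> i \<noteq> j \<and> gcd (aff_label m i) (aff_label m j) = 1
               \<and> w \<in> weyl_group \<Phi>
               \<and> \<Psi> = w ` (\<Phi> \<inter> int_span (aff_root b \<theta>) ({0..r} - {i, j}))))"
proof -
  interpret affine_root_data \<Phi> r b \<theta> m
    using assms(1,4,5) by unfold_locales
  show ?thesis
  proof (intro conjI allI impI)
    fix i j assume "i \<le> r \<and> j \<le> r \<and> i \<noteq> j \<and> gcd (aff_label m i) (aff_label m j) = 1"
    then show "good_subsystem \<Phi> (\<Phi> \<inter> int_span (aff_root b \<theta>) ({0..r} - {i, j}))"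
      by (intro good_subsystem_delete_coprime_nodes) auto
  next
    fix \<Psi> assume "good_subsystem \<Phi> \<Psi>"
    from good_subsystem_conjugate_maximal_parabolic[OF this rank_pos]
    obtain k w where k: "k \<in> {1..r}" and w: "w \<in> weyl_group \<Phi>"
      and \<Psi>: "\<Psi> = w ` (\<Phi> \<inter> int_span b ({1..r} - {k}))" .
    have "{0..r} - {0, k} = {1..r} - {k}" by auto
    then have "int_span (aff_root b \<theta>) ({0..r} - {0, k}) = int_span b ({1..r} - {k})"
      by (metis int_span_cong aff_root_def DiffD2 insertCI)
    moreover have "gcd (aff_label m 0) (aff_label m k) = 1" by (simp add: aff_label_def)
    ultimately show "\<exists>i j w. i \<le> r \<and> j \<le> r \<and> i \<noteq> j \<and> gcd (aff_label m i) (aff_label m j) = 1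
        \<and> w \<in> weyl_group \<Phi> \<and> \<Psi> = w ` (\<Phi> \<inter> int_span (aff_root b \<theta>) ({0..r} - {i, j}))"
      using k w \<Psi> by (intro exI[of _ 0] exI[of _ k] exI[of _ w] conjI) auto
  qed
qed

end
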